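(* Let $K\in\mathbb{N}$, let $\mu$ be a positive even integer, let $h>0$, and let $\alpha<\beta\le\gamma<\delta$ be real numbers with $\beta-\alpha=\delta-\gamma=h$. Let $$\xi^1_\kappa=\alpha+\frac{\beta-\alpha}{K+1}\kappa,\qquad \xi^2_\kappa=\gamma+\frac{\delta-\gamma}{K+1}\kappa,\qquad \kappa=1,\dots,K,$$ and for $i=1,2$ set $$B_{\mu,i}(x)=\frac{\prod_{\kappa=1}^K|x-\xi^i_\kappa|^{-\mu}}{\prod_{\kappa=1}^K|x-\xi^1_\kappa|^{-\mu}+\prod_{\kappa=1}^K|x-\xi^2_\kappa|^{-\mu}}.$$ For $t\ge 0$ and $k\in\{1,\dots,K-1\}$ define $$F_\mu(t,h,k,K)=\left(\frac{k!\,(K-k)!}{\prod_{\kappa=1}^K(K-k+\kappa)+(K+1)^K\left(\frac{t}{h}\right)^K}\right)^{\mu}.$$ Then for every $k=1,\dots,K-1$ and every $x\in(\xi^1_k,\xi^1_{k+1})$, $$B_{\mu,2}(x)\le F_\mu(\gamma-\beta,h,k,K),$$ and for every $k=1,\dots,K-1$ and every $x\in(\xi^2_k,\xi^2_{k+1})$, $$B_{\mu,1}(x)\le \left(\frac{k!\,(K-k)!}{\prod_{\kappa=1}^K(k+\kappa)+(K+1)^K\left(\frac{\gamma-\beta}{h}\right)^K}\right)^{\mu}=F_\mu(\gamma-\beta,h,K-k,K).$$ *)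

theory Defs
  imports "HOL-Analysis.Analysis"
begin

definition xi :: "real \<Rightarrow> real \<Rightarrow> nat \<Rightarrow> nat \<Rightarrow> real" where
  "xi a b K \<kappa> = a + (b - a) / real (K + 1) * real \<kappa>"

definition wprod :: "nat \<Rightarrow> real \<Rightarrow> real \<Rightarrow> nat \<Rightarrow> real \<Rightarrow> real" where
  "wprod \<mu> a b K x = (\<Prod>\<kappa>=1..K. inverse (\<bar>x - xi a b K \<kappa>\<bar> ^ \<mu>))"

definition B1 :: "nat \<Rightarrow> real \<Rightarrow> real \<Rightarrow> real \<Rightarrow> real \<Rightarrow> nat \<Rightarrow> real \<Rightarrow> real" where
  "B1 \<mu> \<alpha> \<beta> \<gamma> \<delta> K x =
     wprod \<mu> \<alpha> \<beta> K x / (wprod \<mu> \<alpha> \<beta> K x + wprod \<mu> \<gamma> \<delta> K x)"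

definition B2 :: "nat \<Rightarrow> real \<Rightarrow> real \<Rightarrow> real \<Rightarrow> real \<Rightarrow> nat \<Rightarrow> real \<Rightarrow> real" where
  "B2 \<mu> \<alpha> \<beta> \<gamma> \<delta> K x =
     wprod \<mu> \<gamma> \<delta> K x / (wprod \<mu> \<alpha> \<beta> K x + wprod \<mu> \<gamma> \<delta> K x)"

definition F :: "nat \<Rightarrow> real \<Rightarrow> real \<Rightarrow> nat \<Rightarrow> nat \<Rightarrow> real" where
  "F \<mu> t h k K =
     (fact k * fact (K - k) /
       ((\<Prod>\<kappa>=1..K. real (K - k + \<kappa>)) + real (K + 1) ^ K * (t / h) ^ K)) ^ \<mu>"

end

theory Submission
  imports Defs
begin

text \<open>
  Let s = h / (K + 1) be the node spacing. If x lies between the k-th and the (k+1)-st node of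
  one cluster, its distances to the nodes of that cluster are at most s (k + 1 - \<kappa>) and
  s (\<kappa> - k) respectively, so their product P is at most s^K k! (K - k)!. The nodes of the other
  cluster lie beyond the additional gap \<gamma> - \<beta>, and expanding a product of sums bounds the
  distance product P' to them from below by s^K \<Prod> (K - k + \<kappa>) + (\<gamma> - \<beta>)^K (by
  s^K \<Prod> (k + \<kappa>) + (\<gamma> - \<beta>)^K when the far cluster is on the left). The weight of the far
  cluster is P^\<mu> / (P^\<mu> + P'^\<mu>) \<le> (P / P')^\<mu>, and the factor s^K cancels.
\<close>

lemma prod_add_power_le_prod:
  fixes a b :: "'i \<Rightarrow> 'a::linordered_semidom"
  assumes "finite A" "A \<noteq> {}" "\<And>i. i \<in> A \<Longrightarrow> 0 \<le> a i" "0 \<le> t"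
    and "\<And>i. i \<in> A \<Longrightarrow> a i + t \<le> b i"
  shows "prod a A + t ^ card A \<le> prod b A"
  using assms
proof (induction A rule: finite_ne_induct)
  case (singleton i)
  then show ?case by simp
next
  case (insert i A)
  have "prod a (insert i A) + t ^ card (insert i A) = a i * prod a A + t * t ^ card A"
    using insert by simp
  also have "\<dots> \<le> (a i * prod a A + t * t ^ card A) + (a i * t ^ card A + t * prod a A)"
    using insert by (simp add: prod_nonneg)
  also have "\<dots> = (a i + t) * (prod a A + t ^ card A)"
    by (simp add: algebra_simps)
  also have "\<dots> \<le> b i * prod b A"
  proof (rule mult_mono)
    show "0 \<le> b i"
      using insert.prems by (meson add_nonneg_nonneg insertI1 order_trans)
  qed (use insert in \<open>auto simp: prod_nonneg\<close>)
  finally show ?case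
    using insert by simp
qed

lemma prod_node_offsets_eq_fact:
  assumes "k \<le> K"
  shows "(\<Prod>\<kappa>=1..K. if \<kappa> \<le> k then k + 1 - \<kappa> else \<kappa> - k) = fact k * fact (K - k)"
proof -
  have split: "{1..K} = {1..k} \<union> {k+1..K}" and disj: "{1..k} \<inter> {k+1..K} = {}"
    using assms by auto
  have "(\<Prod>\<kappa>=1..k. k + 1 - \<kappa>) = fact k"
    using prod.atLeastAtMost_rev[of "\<lambda>\<kappa>. k + 1 - \<kappa>" 1 k] by (simp add: fact_prod)
  moreover have "(\<Prod>\<kappa>=k+1..K. \<kappa> - k) = fact (K - k)"
    using prod.shift_bounds_cl_nat_ivl[of "\<lambda>\<kappa>. \<kappa> - k" 1 k "K - k"] assms by (simp add: fact_prod)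
  ultimately show ?thesis
    unfolding split by (simp add: prod.union_disjoint disj)
qed

lemma prod_dist_between_nodes:
  fixes a s x :: real
  assumes "s > 0" "k \<le> K" "a + s * real k < x" "x < a + s * (real k + 1)"
  shows "0 < (\<Prod>\<kappa>=1..K. \<bar>x - (a + s * real \<kappa>)\<bar>)"
    and "(\<Prod>\<kappa>=1..K. \<bar>x - (a + s * real \<kappa>)\<bar>) \<le> s ^ K * (fact k * fact (K - k))"
proof -
  have dist: "0 < \<bar>x - (a + s * real \<kappa>)\<bar> \<and>
    \<bar>x - (a + s * real \<kappa>)\<bar> \<le> s * real (if \<kappa> \<le> k then k + 1 - \<kappa> else \<kappa> - k)" for \<kappa> :: nat
  proof (cases "\<kappa> \<le> k")
    case True
    then have "s * real \<kappa> \<le> s * real k"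
      using \<open>s > 0\<close> by simp
    then have "0 < x - (a + s * real \<kappa>)" "x - (a + s * real \<kappa>) \<le> s * real (k + 1 - \<kappa>)"
      using assms True by (linarith, simp add: of_nat_diff algebra_simps)
    then show ?thesis
      using True by simp
  next
    case False
    then have "s * (real k + 1) \<le> s * real \<kappa>"
      using \<open>s > 0\<close> by simp
    then have "0 < a + s * real \<kappa> - x" "a + s * real \<kappa> - x \<le> s * real (\<kappa> - k)"
      using assms False by (linarith, simp add: of_nat_diff algebra_simps)
    then show ?thesis
      using False by simp
  qed
  then show "0 < (\<Prod>\<kappa>=1..K. \<bar>x - (a + s * real \<kappa>)\<bar>)"
    by (simp add: prod_pos)
  have "(\<Prod>\<kappa>=1..K. \<bar>x - (a + s * real \<kappa>)\<bar>)
      \<le> (\<Prod>\<kappa>=1..K. s * real (if \<kappa> \<le> k then k + 1 - \<kappa> else \<kappa> - k))"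
    using dist by (intro prod_mono) auto
  also have "\<dots> = s ^ K * real (\<Prod>\<kappa>=1..K. if \<kappa> \<le> k then k + 1 - \<kappa> else \<kappa> - k)"
    by (simp add: prod.distrib)
  also have "\<dots> = s ^ K * (fact k * fact (K - k))"
    unfolding prod_node_offsets_eq_fact[OF \<open>k \<le> K\<close>] by simp
  finally show "(\<Prod>\<kappa>=1..K. \<bar>x - (a + s * real \<kappa>)\<bar>) \<le> s ^ K * (fact k * fact (K - k))" .
qed

lemma prod_dist_right_cluster_ge:
  fixes a c s t x :: real
  assumes "s > 0" "0 \<le> t" "1 \<le> K" "k \<le> K"
    and "x < a + s * (real k + 1)" "a + s * (real K + 1) + t \<le> c"
  shows "s ^ K * (\<Prod>\<kappa>=1..K. real (K - k + \<kappa>)) + t ^ K \<le> (\<Prod>\<kappa>=1..K. \<bar>x - (c + s * real \<kappa>)\<bar>)"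
proof -
  have "s * real (K - k + \<kappa>) + t \<le> \<bar>x - (c + s * real \<kappa>)\<bar>" for \<kappa>
    using assms by (simp add: of_nat_diff algebra_simps)
  then have "(\<Prod>\<kappa>=1..K. s * real (K - k + \<kappa>)) + t ^ card {1..K} \<le> (\<Prod>\<kappa>=1..K. \<bar>x - (c + s * real \<kappa>)\<bar>)"
    using assms by (intro prod_add_power_le_prod) auto
  then show ?thesis
    by (simp add: prod.distrib)
qed

lemma prod_dist_left_cluster_ge:
  fixes a c s t x :: real
  assumes "s > 0" "0 \<le> t" "1 \<le> K"
    and "c + s * real k < x" "a + s * (real K + 1) + t \<le> c"
  shows "s ^ K * (\<Prod>\<kappa>=1..K. real (k + \<kappa>)) + t ^ K \<le> (\<Prod>\<kappa>=1..K. \<bar>x - (a + s * real \<kappa>)\<bar>)"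
proof -
  have "s * real (k + \<kappa>) + t \<le> \<bar>x - (a + s * real (K + 1 - \<kappa>))\<bar>" if "\<kappa> \<le> K" for \<kappa>
    using assms that by (simp add: of_nat_diff algebra_simps)
  then have "(\<Prod>\<kappa>=1..K. s * real (k + \<kappa>)) + t ^ card {1..K} \<le> (\<Prod>\<kappa>=1..K. \<bar>x - (a + s * real (K + 1 - \<kappa>))\<bar>)"
    using assms by (intro prod_add_power_le_prod) auto
  also have "\<dots> = (\<Prod>\<kappa>=1..K. \<bar>x - (a + s * real \<kappa>)\<bar>)"
    using prod.atLeastAtMost_rev[of "\<lambda>\<kappa>. \<bar>x - (a + s * real \<kappa>)\<bar>" 1 K] by simp
  finally show ?thesis
    by (simp add: prod.distrib)
qed

lemma inverse_power_weight_le: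
  fixes P Q p q :: "'a::linordered_field"
  assumes "0 < P" "P \<le> p" "0 < q" "q \<le> Q"
  shows "inverse (Q ^ n) / (inverse (P ^ n) + inverse (Q ^ n)) \<le> (p / q) ^ n"
    and "inverse (Q ^ n) / (inverse (Q ^ n) + inverse (P ^ n)) \<le> (p / q) ^ n"
proof -
  have "0 < P ^ n" "0 < Q ^ n"
    using assms by simp_all
  moreover have "inverse v / (inverse u + inverse v) = u / (u + v)" if "0 < u" "0 < v" for u v :: 'a
    using that by (simp add: field_simps)
  ultimately have "inverse (Q ^ n) / (inverse (P ^ n) + inverse (Q ^ n)) = P ^ n / (P ^ n + Q ^ n)"
    by simp
  also have "\<dots> \<le> P ^ n / Q ^ n"
    using \<open>0 < P ^ n\<close> \<open>0 < Q ^ n\<close> by (intro divide_left_mono) simp_all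
  also have "\<dots> \<le> (p / q) ^ n"
    unfolding power_divide[symmetric] using assms by (intro power_mono frac_le) auto
  finally show "inverse (Q ^ n) / (inverse (P ^ n) + inverse (Q ^ n)) \<le> (p / q) ^ n" .
  then show "inverse (Q ^ n) / (inverse (Q ^ n) + inverse (P ^ n)) \<le> (p / q) ^ n"
    by (simp only: add.commute)
qed

lemma scaled_fraction_eq:
  fixes s h t f D :: real
  assumes "s > 0" "h = s * real (K + 1)"
  shows "s ^ K * f / (s ^ K * D + t ^ K) = f / (D + real (K + 1) ^ K * (t / h) ^ K)"
proof -
  have "real (K + 1) * (t / h) = t / s"
    using assms by (simp del: of_nat_Suc)
  then have "real (K + 1) ^ K * (t / h) ^ K = t ^ K / s ^ K"
    by (metis power_divide power_mult_distrib)
  moreover have "D + t ^ K / s ^ K = (s ^ K * D + t ^ K) / s ^ K"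
    using assms by (simp add: field_simps)
  ultimately show ?thesis
    by simp
qed

lemma wprod_eq_inverse_power_prod:
  "wprod \<mu> a b K x = inverse ((\<Prod>\<kappa>=1..K. \<bar>x - xi a b K \<kappa>\<bar>) ^ \<mu>)"
  using prod_inversef[of "\<lambda>\<kappa>. \<bar>x - xi a b K \<kappa>\<bar> ^ \<mu>" "{1..K}"]
  by (simp add: wprod_def prod_power_distrib comp_def)

lemma xi_eq_equispaced:
  assumes "b - a = s * real (K + 1)"
  shows "xi a b K \<kappa> = a + s * real \<kappa>"
  using assms by (simp add: xi_def)

lemma F_complement_eq:
  assumes "k \<le> K"
  shows "F \<mu> t h (K - k) K
    = (fact k * fact (K - k) / ((\<Prod>\<kappa>=1..K. real (k + \<kappa>)) + real (K + 1) ^ K * (t / h) ^ K)) ^ \<mu>"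
  using assms by (simp add: F_def mult.commute)

lemma B2_le_F:
  fixes h \<alpha> \<beta> \<gamma> \<delta> x :: real
  assumes "h > 0" and spacing: "\<beta> - \<alpha> = h" "\<delta> - \<gamma> = h" and "\<beta> \<le> \<gamma>"
    and "1 \<le> K" "k \<le> K" and between: "xi \<alpha> \<beta> K k < x" "x < xi \<alpha> \<beta> K (k + 1)"
  shows "B2 \<mu> \<alpha> \<beta> \<gamma> \<delta> K x \<le> F \<mu> (\<gamma> - \<beta>) h k K"
proof -
  define s where "s = h / real (K + 1)"
  have "s > 0" and h: "h = s * real (K + 1)"
    using \<open>h > 0\<close> by (simp_all add: s_def)
  have nodes: "xi \<alpha> \<beta> K \<kappa> = \<alpha> + s * real \<kappa>" "xi \<gamma> \<delta> K \<kappa> = \<gamma> + s * real \<kappa>" for \<kappa>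
    using spacing h by (simp_all add: xi_eq_equispaced)
  have x: "\<alpha> + s * real k < x" "x < \<alpha> + s * (real k + 1)"
    using between unfolding nodes by (simp_all add: ac_simps)
  have gap: "\<alpha> + s * (real K + 1) + (\<gamma> - \<beta>) \<le> \<gamma>" and "0 \<le> \<gamma> - \<beta>"
    using spacing(1) \<open>\<beta> \<le> \<gamma>\<close> h by (simp_all add: algebra_simps)
  note near = prod_dist_between_nodes[OF \<open>s > 0\<close> \<open>k \<le> K\<close> x]
  note far = prod_dist_right_cluster_ge[OF \<open>s > 0\<close> \<open>0 \<le> \<gamma> - \<beta>\<close> \<open>1 \<le> K\<close> \<open>k \<le> K\<close> x(2) gap]
  have far_pos: "0 < s ^ K * (\<Prod>\<kappa>=1..K. real (K - k + \<kappa>)) + (\<gamma> - \<beta>) ^ K"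
    using \<open>s > 0\<close> \<open>0 \<le> \<gamma> - \<beta>\<close> by (intro add_pos_nonneg mult_pos_pos prod_pos) auto
  have "B2 \<mu> \<alpha> \<beta> \<gamma> \<delta> K x
      \<le> (s ^ K * (fact k * fact (K - k)) / (s ^ K * (\<Prod>\<kappa>=1..K. real (K - k + \<kappa>)) + (\<gamma> - \<beta>) ^ K)) ^ \<mu>"
    unfolding B2_def wprod_eq_inverse_power_prod nodes
    using near far_pos far by (rule inverse_power_weight_le(1))
  then show ?thesis
    by (simp add: F_def scaled_fraction_eq[OF \<open>s > 0\<close> h])
qed

lemma B1_le_F_complement:
  fixes h \<alpha> \<beta> \<gamma> \<delta> x :: real
  assumes "h > 0" and spacing: "\<beta> - \<alpha> = h" "\<delta> - \<gamma> = h" and "\<beta> \<le> \<gamma>"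
    and "1 \<le> K" "k \<le> K" and between: "xi \<gamma> \<delta> K k < x" "x < xi \<gamma> \<delta> K (k + 1)"
  shows "B1 \<mu> \<alpha> \<beta> \<gamma> \<delta> K x
    \<le> (fact k * fact (K - k) / ((\<Prod>\<kappa>=1..K. real (k + \<kappa>)) + real (K + 1) ^ K * ((\<gamma> - \<beta>) / h) ^ K)) ^ \<mu>"
proof -
  define s where "s = h / real (K + 1)"
  have "s > 0" and h: "h = s * real (K + 1)"
    using \<open>h > 0\<close> by (simp_all add: s_def)
  have nodes: "xi \<alpha> \<beta> K \<kappa> = \<alpha> + s * real \<kappa>" "xi \<gamma> \<delta> K \<kappa> = \<gamma> + s * real \<kappa>" for \<kappa>
    using spacing h by (simp_all add: xi_eq_equispaced)
  have x: "\<gamma> + s * real k < x" "x < \<gamma> + s * (real k + 1)"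
    using between unfolding nodes by (simp_all add: ac_simps)
  have gap: "\<alpha> + s * (real K + 1) + (\<gamma> - \<beta>) \<le> \<gamma>" and "0 \<le> \<gamma> - \<beta>"
    using spacing(1) \<open>\<beta> \<le> \<gamma>\<close> h by (simp_all add: algebra_simps)
  note near = prod_dist_between_nodes[OF \<open>s > 0\<close> \<open>k \<le> K\<close> x]
  note far = prod_dist_left_cluster_ge[OF \<open>s > 0\<close> \<open>0 \<le> \<gamma> - \<beta>\<close> \<open>1 \<le> K\<close> x(1) gap]
  have far_pos: "0 < s ^ K * (\<Prod>\<kappa>=1..K. real (k + \<kappa>)) + (\<gamma> - \<beta>) ^ K"
    using \<open>s > 0\<close> \<open>0 \<le> \<gamma> - \<beta>\<close> by (intro add_pos_nonneg mult_pos_pos prod_pos) auto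
  have "B1 \<mu> \<alpha> \<beta> \<gamma> \<delta> K x
      \<le> (s ^ K * (fact k * fact (K - k)) / (s ^ K * (\<Prod>\<kappa>=1..K. real (k + \<kappa>)) + (\<gamma> - \<beta>) ^ K)) ^ \<mu>"
    unfolding B1_def wprod_eq_inverse_power_prod nodes
    using near far_pos far by (rule inverse_power_weight_le(2))
  then show ?thesis
    by (simp add: scaled_fraction_eq[OF \<open>s > 0\<close> h])
qed

theorem lemma1:
  fixes K \<mu> :: nat and h \<alpha> \<beta> \<gamma> \<delta> :: real
  assumes "\<mu> > 0" and "even \<mu>" and "h > 0"
    and "\<alpha> < \<beta>" and "\<beta> \<le> \<gamma>" and "\<gamma> < \<delta>"
    and "\<beta> - \<alpha> = h" and "\<delta> - \<gamma> = h"
  shows "(\<forall>k \<in> {1..K-1}. \<forall>x. xi \<alpha> \<beta> K k < x \<and> x < xi \<alpha> \<beta> K (k + 1) \<longrightarrow>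
            B2 \<mu> \<alpha> \<beta> \<gamma> \<delta> K x \<le> F \<mu> (\<gamma> - \<beta>) h k K)
       \<and> (\<forall>k \<in> {1..K-1}. \<forall>x. xi \<gamma> \<delta> K k < x \<and> x < xi \<gamma> \<delta> K (k + 1) \<longrightarrow>
            B1 \<mu> \<alpha> \<beta> \<gamma> \<delta> K x
              \<le> (fact k * fact (K - k) /
                  ((\<Prod>\<kappa>=1..K. real (k + \<kappa>)) + real (K + 1) ^ K * ((\<gamma> - \<beta>) / h) ^ K)) ^ \<mu>
            \<and> (fact k * fact (K - k) /
                  ((\<Prod>\<kappa>=1..K. real (k + \<kappa>)) + real (K + 1) ^ K * ((\<gamma> - \<beta>) / h) ^ K)) ^ \<mu>
              = F \<mu> (\<gamma> - \<beta>) h (K - k) K)"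
proof -
  \<comment> \<open>wprod uses absolute values, so neither the parity nor the positivity of \<mu> is needed.\<close>
  have "k \<in> {1..K-1} \<Longrightarrow> 1 \<le> K \<and> k \<le> K" for k
    by auto
  then show ?thesis
    using B2_le_F[OF \<open>h > 0\<close> \<open>\<beta> - \<alpha> = h\<close> \<open>\<delta> - \<gamma> = h\<close> \<open>\<beta> \<le> \<gamma>\<close>]
      B1_le_F_complement[OF \<open>h > 0\<close> \<open>\<beta> - \<alpha> = h\<close> \<open>\<delta> - \<gamma> = h\<close> \<open>\<beta> \<le> \<gamma>\<close>]
      F_complement_eq[of _ K \<mu> "\<gamma> - \<beta>" h, symmetric]
    by blast
qed

end
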